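(* Let $\alpha\colon\Gamma\curvearrowright X$ be an action of a countable group on a compact, Hausdorff, $0$-dimensional space. Then $T(\alpha)$ is almost unperforated if and only if for all $a,b\in T(\alpha)$ the following holds: if there exists $k\in\mathbb N$ with $a\le kb$, and every $\mu\in\mathcal M_\infty(\alpha)$ with $\mu(b)=1$ satisfies $\mu(a)<1$, then $a\le b$.
   Context: Clopen type semigroup: let $Y = X\times\mathbb N$, and let $\tilde\Gamma=\Gamma\times\mathfrak S$ ($\mathfrak S$ the permutation group of $\mathbb N$) act on $Y$ by $(\gamma,\sigma)(x,n)=(\alpha(\gamma)x,\sigma(n))$. A clopen $A\subseteq Y$ is bounded if $A\cap(X\times\{n\})=\emptyset$ for all large $n$. Bounded clopen $A,B$ are equidecomposable if there are clopen $A_1,\dots,A_n$ and $\tilde\gamma_i\in\tilde\Gamma$ with $A=\bigsqcup_i A_i$, $B=\bigsqcup_i\tilde\gamma_iA_i$. $T(\alpha)$ is the set of classes $[A]$, with $[A]+[B]=[A'\sqcup B']$ for disjoint representatives; $0=[\emptyset]$. $a\le b$ iff $b=a+c$ for some $c\in T(\alpha)$. $T(\alpha)$ is almost unperforated if $(n+1)a\le nb\Rightarrow a\le b$ for all $a,b\in T(\alpha)$ and $n\in\mathbb N$. A state is a monoid homomorphism $\mu\colon (T(\alpha),+)\to[0,+\infty]$ (with $x+\infty=\infty$); $\mathcal M_\infty(\alpha)$ denotes the set of states. *)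

theory Defs
  imports "HOL-Analysis.Analysis" "HOL-Algebra.Group"
begin

definition continuous_action :: "('g, 'b) monoid_scheme \<Rightarrow> ('g \<Rightarrow> 'x::topological_space \<Rightarrow> 'x) \<Rightarrow> bool" where
  "continuous_action G \<alpha> \<longleftrightarrow> group G \<and> \<alpha> \<one>\<^bsub>G\<^esub> = id \<and>
     (\<forall>g\<in>carrier G. \<forall>h\<in>carrier G. \<alpha> (g \<otimes>\<^bsub>G\<^esub> h) = \<alpha> g \<circ> \<alpha> h) \<and>
     (\<forall>g\<in>carrier G. continuous_on UNIV (\<alpha> g))"

definition zero_dimensional :: "'x::topological_space itself \<Rightarrow> bool" where
  "zero_dimensional _ \<longleftrightarrow> (\<forall>U::'x set. \<forall>x. open U \<and> x \<in> U \<longrightarrow> (\<exists>V. open V \<and> closed V \<and> x \<in> V \<and> V \<subseteq> U))"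

text \<open>Y = X \<times> nat with the product topology (nat discrete).\<close>
definition clopenY :: "('x::topological_space \<times> nat) set \<Rightarrow> bool" where
  "clopenY A \<longleftrightarrow> open A \<and> closed A"

definition boundedY :: "('x \<times> nat) set \<Rightarrow> bool" where
  "boundedY A \<longleftrightarrow> (\<exists>N. \<forall>n\<ge>N. A \<inter> (UNIV \<times> {n}) = {})"

definition actY :: "('g \<Rightarrow> 'x \<Rightarrow> 'x) \<Rightarrow> 'g \<Rightarrow> (nat \<Rightarrow> nat) \<Rightarrow> ('x \<times> nat) set \<Rightarrow> ('x \<times> nat) set" where
  "actY \<alpha> g \<sigma> A = (\<lambda>(x, n). (\<alpha> g x, \<sigma> n)) ` A"

definition equidec :: "('g, 'b) monoid_scheme \<Rightarrow> ('g \<Rightarrow> 'x::topological_space \<Rightarrow> 'x)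
    \<Rightarrow> ('x \<times> nat) set \<Rightarrow> ('x \<times> nat) set \<Rightarrow> bool" where
  "equidec G \<alpha> A B \<longleftrightarrow>
     (\<exists>(n::nat) P g s. (\<forall>i<n. clopenY (P i) \<and> g i \<in> carrier G \<and> bij (s i)) \<and>
        disjoint_family_on P {..<n} \<and> A = (\<Union>i<n. P i) \<and>
        disjoint_family_on (\<lambda>i. actY \<alpha> (g i) (s i) (P i)) {..<n} \<and>
        B = (\<Union>i<n. actY \<alpha> (g i) (s i) (P i)))"

definition tcls :: "('g, 'b) monoid_scheme \<Rightarrow> ('g \<Rightarrow> 'x::topological_space \<Rightarrow> 'x)
    \<Rightarrow> ('x \<times> nat) set \<Rightarrow> ('x \<times> nat) set set" where
  "tcls G \<alpha> A = {B. clopenY B \<and> boundedY B \<and> equidec G \<alpha> A B}"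

definition Tsg :: "('g, 'b) monoid_scheme \<Rightarrow> ('g \<Rightarrow> 'x::topological_space \<Rightarrow> 'x) \<Rightarrow> ('x \<times> nat) set set set" where
  "Tsg G \<alpha> = {tcls G \<alpha> A | A. clopenY A \<and> boundedY A}"

definition tadd :: "('g, 'b) monoid_scheme \<Rightarrow> ('g \<Rightarrow> 'x::topological_space \<Rightarrow> 'x)
    \<Rightarrow> ('x \<times> nat) set set \<Rightarrow> ('x \<times> nat) set set \<Rightarrow> ('x \<times> nat) set set" where
  "tadd G \<alpha> a b = {C. clopenY C \<and> boundedY C \<and>
      (\<exists>A\<in>a. \<exists>B\<in>b. A \<inter> B = {} \<and> equidec G \<alpha> (A \<union> B) C)}"

definition tzero :: "('g, 'b) monoid_scheme \<Rightarrow> ('g \<Rightarrow> 'x::topological_space \<Rightarrow> 'x) \<Rightarrow> ('x \<times> nat) set set" where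
  "tzero G \<alpha> = tcls G \<alpha> {}"

primrec tmult :: "('g, 'b) monoid_scheme \<Rightarrow> ('g \<Rightarrow> 'x::topological_space \<Rightarrow> 'x)
    \<Rightarrow> nat \<Rightarrow> ('x \<times> nat) set set \<Rightarrow> ('x \<times> nat) set set" where
  "tmult G \<alpha> 0 a = tzero G \<alpha>"
| "tmult G \<alpha> (Suc n) a = tadd G \<alpha> (tmult G \<alpha> n a) a"

definition tle :: "('g, 'b) monoid_scheme \<Rightarrow> ('g \<Rightarrow> 'x::topological_space \<Rightarrow> 'x)
    \<Rightarrow> ('x \<times> nat) set set \<Rightarrow> ('x \<times> nat) set set \<Rightarrow> bool" where
  "tle G \<alpha> a b \<longleftrightarrow> (\<exists>c\<in>Tsg G \<alpha>. b = tadd G \<alpha> a c)"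

definition almost_unperforated :: "('g, 'b) monoid_scheme \<Rightarrow> ('g \<Rightarrow> 'x::topological_space \<Rightarrow> 'x) \<Rightarrow> bool" where
  "almost_unperforated G \<alpha> \<longleftrightarrow>
     (\<forall>a\<in>Tsg G \<alpha>. \<forall>b\<in>Tsg G \<alpha>. \<forall>n::nat.
        tle G \<alpha> (tmult G \<alpha> (Suc n) a) (tmult G \<alpha> n b) \<longrightarrow> tle G \<alpha> a b)"

definition is_state :: "('g, 'b) monoid_scheme \<Rightarrow> ('g \<Rightarrow> 'x::topological_space \<Rightarrow> 'x)
    \<Rightarrow> (('x \<times> nat) set set \<Rightarrow> ennreal) \<Rightarrow> bool" where
  "is_state G \<alpha> \<mu> \<longleftrightarrow> \<mu> (tzero G \<alpha>) = 0 \<and>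
     (\<forall>a\<in>Tsg G \<alpha>. \<forall>b\<in>Tsg G \<alpha>. \<mu> (tadd G \<alpha> a b) = \<mu> a + \<mu> b)"

end

theory Submission
  imports Defs "HOL-Algebra.Divisibility"
begin

text \<open>Equidecomposability is an equivalence relation on bounded clopen sets that is compatible with
  disjoint unions, so \<open>T(\<alpha>)\<close> is a commutative monoid whose order is the algebraic preorder
  (\<^const>\<open>factor\<close>). Continuity of the action is only needed to keep clopen sets clopen.

  If \<open>(n + 1) a \<le> n b\<close>, a state with \<open>\<mu> b = 1\<close> satisfies \<open>(n + 1) \<mu> a \<le> n\<close>, hence \<open>\<mu> a < 1\<close>.
  Conversely let \<open>a \<le> k b\<close> but \<open>\<not> a \<le> b\<close>. On the order ideal generated by \<open>b\<close>, the functional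
  \<open>q x = inf {(j - m) / n | n x + m a \<le> j b}\<close> is nonnegative by almost unperforation, and it is
  subadditive, monotone and homogeneous, with \<open>q (x + m a) \<ge> q x + m\<close> and \<open>q b \<le> 1\<close>. Zorn's
  lemma gives a pointwise minimal functional with these properties, and minimality forces
  additivity (Goodearl--Handelman): \<open>x \<mapsto> inf {(f (r x + n z) - n f z) / r}\<close> has the same
  properties and lies below \<open>f\<close>, so it equals \<open>f\<close>, whence \<open>f x + f z \<le> f (x + z)\<close>. Normalised at
  \<open>b\<close> and extended by \<open>\<infinity>\<close> outside the ideal, this functional is a state with
  \<open>\<mu> b = 1 \<le> \<mu> a\<close>.\<close>

section \<open>Equidecompositions\<close>

definition equidecomposition :: "'i set \<Rightarrow> ('i \<Rightarrow> 'y set) \<Rightarrow> ('i \<Rightarrow> 'y \<Rightarrow> 'y) \<Rightarrow> 'y set \<Rightarrow> 'y set \<Rightarrow> bool"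
  where "equidecomposition I P F A B \<longleftrightarrow> finite I \<and>
    disjoint_family_on P I \<and> A = (\<Union>i\<in>I. P i) \<and>
    disjoint_family_on (\<lambda>i. F i ` P i) I \<and> B = (\<Union>i\<in>I. F i ` P i)"

lemma equidecomposition_reindex:
  assumes "equidecomposition I P F A B" and h: "bij_betw h J I"
  shows "equidecomposition J (P \<circ> h) (F \<circ> h) A B"
proof -
  have disj: "disjoint_family_on (X \<circ> h) J" if "disjoint_family_on X I" for X :: "_ \<Rightarrow> 'y set"
  proof (unfold disjoint_family_on_def, intro ballI impI)
    fix m n assume "m \<in> J" "n \<in> J" "m \<noteq> n"
    then have "h m \<in> I" "h n \<in> I" "h m \<noteq> h n"
      using h by (auto simp: bij_betw_def inj_on_eq_iff)
    then show "(X \<circ> h) m \<inter> (X \<circ> h) n = {}"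
      using that by (simp add: disjoint_family_on_def)
  qed
  have UN: "(\<Union>j\<in>J. X (h j)) = (\<Union>i\<in>I. X i)" for X :: "_ \<Rightarrow> 'y set"
    using h by (metis bij_betw_def image_image)
  show ?thesis
    using assms bij_betw_finite[OF h] disj[of P] disj[of "\<lambda>i. F i ` P i"]
      UN[of P] UN[of "\<lambda>i. F i ` P i"]
    by (simp add: equidecomposition_def comp_def)
qed

lemma equidecomposition_sym:
  assumes AB: "equidecomposition I P F A B"
    and inv: "\<And>i y. i \<in> I \<Longrightarrow> y \<in> P i \<Longrightarrow> F' i (F i y) = y"
  shows "equidecomposition I (\<lambda>i. F i ` P i) F' B A"
proof -
  have "F' i ` F i ` P i = P i" if "i \<in> I" for i
    using inv[OF that] by (force simp: image_image)
  with AB show ?thesis by (simp add: equidecomposition_def disjoint_family_on_def)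
qed

lemma disjoint_family_on_Int_vimage:
  assumes "disjoint_family_on P I" "disjoint_family_on Q J"
  shows "disjoint_family_on (\<lambda>(i, j). P i \<inter> F i -` Q j) (I \<times> J)"
proof (unfold disjoint_family_on_def, intro ballI impI)
  fix p p' assume "p \<in> I \<times> J" "p' \<in> I \<times> J" "p \<noteq> p'"
  then obtain i j i' j' where "p = (i, j)" "p' = (i', j')" "i \<in> I" "j \<in> J" "i' \<in> I" "j' \<in> J"
    and "i \<noteq> i' \<or> j \<noteq> j'" by auto
  then show "(case p of (i, j) \<Rightarrow> P i \<inter> F i -` Q j) \<inter> (case p' of (i, j) \<Rightarrow> P i \<inter> F i -` Q j) = {}"
    using assms unfolding disjoint_family_on_def by (cases "i = i'") blast+
qed

lemma disjoint_family_on_image_Int: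
  assumes "disjoint_family_on X I" "disjoint_family_on (\<lambda>j. H j ` Q j) J"
    and inj: "\<And>j. j \<in> J \<Longrightarrow> inj_on (H j) (Q j)"
  shows "disjoint_family_on (\<lambda>(i, j). H j ` (X i \<inter> Q j)) (I \<times> J)"
proof (unfold disjoint_family_on_def, intro ballI impI)
  fix p p' assume "p \<in> I \<times> J" "p' \<in> I \<times> J" "p \<noteq> p'"
  then obtain i j i' j' where ij: "p = (i, j)" "p' = (i', j')" "i \<in> I" "j \<in> J" "i' \<in> I" "j' \<in> J"
    and "i \<noteq> i' \<or> j \<noteq> j'" by auto
  then consider "j = j'" "i \<noteq> i'" | "j \<noteq> j'" by blast
  then show "(case p of (i, j) \<Rightarrow> H j ` (X i \<inter> Q j)) \<inter> (case p' of (i, j) \<Rightarrow> H j ` (X i \<inter> Q j)) = {}"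
  proof cases
    case 1
    have "H j ` ((X i \<inter> Q j) \<inter> (X i' \<inter> Q j)) = H j ` (X i \<inter> Q j) \<inter> H j ` (X i' \<inter> Q j)"
      by (rule inj_on_image_Int[OF inj[OF ij(4)]]) auto
    moreover have "(X i \<inter> Q j) \<inter> (X i' \<inter> Q j) = {}"
      using 1 ij assms(1) by (auto simp: disjoint_family_on_def)
    ultimately show ?thesis
      using 1 ij by simp
  next
    case 2
    then show ?thesis
      using ij assms(2) unfolding disjoint_family_on_def by blast
  qed
qed

lemma equidecomposition_trans:
  assumes AB: "equidecomposition I P F A B" and BC: "equidecomposition J Q H B C"
    and inj: "\<And>j. j \<in> J \<Longrightarrow> inj_on (H j) (Q j)"
  shows "equidecomposition (I \<times> J) (\<lambda>(i, j). P i \<inter> F i -` Q j) (\<lambda>(i, j). H j \<circ> F i) A C"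
proof -
  define R where "R = (\<lambda>(i, j). P i \<inter> F i -` Q j)"
  define K where "K = (\<lambda>(i, j). H j \<circ> F i)"
  have "F i ` (P i \<inter> F i -` Q j) = F i ` P i \<inter> Q j" for i j
    by blast
  then have KR: "K (i, j) ` R (i, j) = H j ` (F i ` P i \<inter> Q j)" for i j
    unfolding K_def R_def by (simp only: case_prod_conv image_comp[symmetric])
  have "disjoint_family_on R (I \<times> J)"
    using AB BC unfolding R_def equidecomposition_def by (simp add: disjoint_family_on_Int_vimage)
  moreover have "P i = (\<Union>j\<in>J. R (i, j))" if "i \<in> I" for i
  proof -
    have "F i ` P i \<subseteq> (\<Union>j\<in>J. Q j)"
      using AB BC that unfolding equidecomposition_def by blast
    then show ?thesis unfolding R_def by blast
  qed
  then have "A = (\<Union>p\<in>I \<times> J. R p)"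
    using AB by (auto simp: equidecomposition_def)
  moreover have "(\<lambda>p. K p ` R p) = (\<lambda>(i, j). H j ` (F i ` P i \<inter> Q j))"
    by (simp add: fun_eq_iff split_paired_all KR)
  then have "disjoint_family_on (\<lambda>p. K p ` R p) (I \<times> J)"
    using AB BC inj by (simp add: equidecomposition_def disjoint_family_on_image_Int)
  moreover have "H j ` Q j = (\<Union>i\<in>I. K (i, j) ` R (i, j))" if "j \<in> J" for j
  proof -
    have "Q j = (\<Union>i\<in>I. F i ` P i \<inter> Q j)"
      using AB BC that unfolding equidecomposition_def by blast
    then show ?thesis unfolding KR by (metis image_UN)
  qed
  then have "C = (\<Union>p\<in>I \<times> J. K p ` R p)"
    using BC by (auto simp: equidecomposition_def)
  ultimately show ?thesis
    using AB BC by (simp add: equidecomposition_def R_def K_def)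
qed

lemma disjoint_family_on_case_sum:
  assumes "disjoint_family_on P I" "disjoint_family_on Q J"
    and "\<And>i j. i \<in> I \<Longrightarrow> j \<in> J \<Longrightarrow> P i \<inter> Q j = {}"
  shows "disjoint_family_on (case_sum P Q) (I <+> J)"
proof (unfold disjoint_family_on_def, intro ballI impI)
  fix k l assume "k \<in> I <+> J" "l \<in> I <+> J" "k \<noteq> l"
  then show "case_sum P Q k \<inter> case_sum P Q l = {}"
    using assms by (elim PlusE; simp add: disjoint_family_on_def; blast)
qed

lemma equidecomposition_Un:
  assumes AA': "equidecomposition I P F A A'" and BB': "equidecomposition J Q H B B'"
    and "A \<inter> B = {}" "A' \<inter> B' = {}"
  shows "equidecomposition (I <+> J) (case_sum P Q) (case_sum F H) (A \<union> B) (A' \<union> B')"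
proof -
  have "(\<lambda>k. case_sum F H k ` case_sum P Q k) = case_sum (\<lambda>i. F i ` P i) (\<lambda>j. H j ` Q j)"
    by (rule ext) (simp split: sum.split)
  moreover have "P i \<inter> Q j = {}" "F i ` P i \<inter> H j ` Q j = {}" if "i \<in> I" "j \<in> J" for i j
    using assms that unfolding equidecomposition_def by blast+
  then have "disjoint_family_on (case_sum P Q) (I <+> J)"
    "disjoint_family_on (case_sum (\<lambda>i. F i ` P i) (\<lambda>j. H j ` Q j)) (I <+> J)"
    using AA' BB' by (simp_all add: equidecomposition_def disjoint_family_on_case_sum)
  ultimately show ?thesis
    using AA' BB' by (simp add: equidecomposition_def UN_Un Plus_def)
qed

section \<open>The type semigroup is a commutative monoid\<close>

definition actY_map :: "('g \<Rightarrow> 'x \<Rightarrow> 'x) \<Rightarrow> 'g \<Rightarrow> (nat \<Rightarrow> nat) \<Rightarrow> 'x \<times> nat \<Rightarrow> 'x \<times> nat"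
  where "actY_map \<alpha> g s = (\<lambda>(x, n). (\<alpha> g x, s n))"

lemma actY_eq_image: "actY \<alpha> g s A = actY_map \<alpha> g s ` A"
  by (simp add: actY_def actY_map_def)

definition movesY :: "('g, 'b) monoid_scheme \<Rightarrow> ('g \<Rightarrow> 'x \<Rightarrow> 'x) \<Rightarrow> ('x \<times> nat \<Rightarrow> 'x \<times> nat) set"
  where "movesY G \<alpha> = {actY_map \<alpha> g s | g s. g \<in> carrier G \<and> bij s}"

lemma clopenY_empty [simp]: "clopenY {}"
  by (simp add: clopenY_def)

lemma clopenY_Int: "clopenY A \<Longrightarrow> clopenY B \<Longrightarrow> clopenY (A \<inter> B)"
  by (auto simp: clopenY_def)

lemma clopenY_Un: "clopenY A \<Longrightarrow> clopenY B \<Longrightarrow> clopenY (A \<union> B)"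
  by (auto simp: clopenY_def)

lemma boundedY_iff_subset: "boundedY A \<longleftrightarrow> (\<exists>N. A \<subseteq> UNIV \<times> {..<N})"
proof
  assume "boundedY A"
  then obtain N where N: "\<And>n. n \<ge> N \<Longrightarrow> A \<inter> (UNIV \<times> {n}) = {}"
    by (auto simp: boundedY_def)
  have "n < N" if "(x, n) \<in> A" for x n
    using that N[of n] by (cases "n < N") auto
  then have "A \<subseteq> UNIV \<times> {..<N}"
    by auto
  then show "\<exists>N. A \<subseteq> UNIV \<times> {..<N}" ..
next
  assume "\<exists>N. A \<subseteq> UNIV \<times> {..<N}"
  then obtain N where "A \<subseteq> UNIV \<times> {..<N}" ..
  then show "boundedY A"
    unfolding boundedY_def by (intro exI[of _ N]) auto
qed

lemma boundedY_empty [simp]: "boundedY {}"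
  by (simp add: boundedY_iff_subset)

lemma boundedY_Un:
  assumes "boundedY A" "boundedY B"
  shows "boundedY (A \<union> B)"
proof -
  obtain N M where "A \<subseteq> UNIV \<times> {..<N}" "B \<subseteq> UNIV \<times> {..<M}"
    using assms by (auto simp: boundedY_iff_subset)
  then have "A \<union> B \<subseteq> UNIV \<times> {..<max N M}" by auto
  then show ?thesis by (auto simp: boundedY_iff_subset)
qed

definition type_monoid ::
    "('g, 'b) monoid_scheme \<Rightarrow> ('g \<Rightarrow> 'x::topological_space \<Rightarrow> 'x) \<Rightarrow> ('x \<times> nat) set set monoid"
  where "type_monoid G \<alpha> = \<lparr>carrier = Tsg G \<alpha>, mult = tadd G \<alpha>, one = tzero G \<alpha>\<rparr>"

lemma TsgE:
  assumes "a \<in> Tsg G \<alpha>"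
  obtains A where "clopenY A" "boundedY A" "a = tcls G \<alpha> A"
  using assms by (auto simp: Tsg_def)

lemma TsgI: "clopenY A \<Longrightarrow> boundedY A \<Longrightarrow> tcls G \<alpha> A \<in> Tsg G \<alpha>"
  by (auto simp: Tsg_def)

lemma tzero_closed: "tzero G \<alpha> \<in> Tsg G \<alpha>"
  by (simp add: tzero_def TsgI)

lemma tadd_commute: "tadd G \<alpha> a b = tadd G \<alpha> b a"
  unfolding tadd_def by (rule Collect_cong) (metis Int_commute Un_commute)

locale type_semigroup =
  fixes G :: "('g, 'b) monoid_scheme" (structure) and \<alpha> :: "'g \<Rightarrow> 'x::topological_space \<Rightarrow> 'x"
  assumes action: "continuous_action G \<alpha>"
begin

sublocale group G
  using action by (simp add: continuous_action_def)

lemma action_one: "\<alpha> \<one> = id"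
  using action by (simp add: continuous_action_def)

lemma action_mult: "g \<in> carrier G \<Longrightarrow> h \<in> carrier G \<Longrightarrow> \<alpha> (g \<otimes> h) = \<alpha> g \<circ> \<alpha> h"
  using action by (simp add: continuous_action_def)

lemma continuous_on_action: "g \<in> carrier G \<Longrightarrow> continuous_on UNIV (\<alpha> g)"
  using action by (simp add: continuous_action_def)

lemma movesY_comp:
  assumes "F \<in> movesY G \<alpha>" "H \<in> movesY G \<alpha>"
  shows "H \<circ> F \<in> movesY G \<alpha>"
proof -
  obtain g s h t where "F = actY_map \<alpha> g s" "H = actY_map \<alpha> h t"
    and "g \<in> carrier G" "h \<in> carrier G" "bij s" "bij t"
    using assms by (auto simp: movesY_def)
  moreover from this have "H \<circ> F = actY_map \<alpha> (h \<otimes> g) (t \<circ> s)"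
    by (auto simp: actY_map_def action_mult)
  ultimately show ?thesis
    by (auto simp: movesY_def intro!: bij_comp)
qed

lemma movesY_inverse:
  assumes "F \<in> movesY G \<alpha>"
  obtains F' where "F' \<in> movesY G \<alpha>" "\<And>y. F' (F y) = y" "\<And>y. F (F' y) = y"
proof -
  obtain g s where g: "g \<in> carrier G" and s: "bij s" and F: "F = actY_map \<alpha> g s"
    using assms by (auto simp: movesY_def)
  have "\<alpha> (inv g) \<circ> \<alpha> g = id" "\<alpha> g \<circ> \<alpha> (inv g) = id"
    using g action_mult[of "inv g" g] action_mult[of g "inv g"] by (simp_all add: action_one)
  then have "\<alpha> (inv g) (\<alpha> g x) = x" "\<alpha> g (\<alpha> (inv g) x) = x" for x
    by (metis comp_apply id_apply)+
  moreover have "inv_into UNIV s (s n) = n" "s (inv_into UNIV s n) = n" for n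
    using s by (simp_all add: bij_is_inj bij_is_surj surj_f_inv_f)
  moreover have "actY_map \<alpha> (inv g) (inv_into UNIV s) \<in> movesY G \<alpha>"
    unfolding movesY_def using g s bij_imp_bij_inv inv_closed by blast
  ultimately show ?thesis
    by (intro that[of "actY_map \<alpha> (inv g) (inv_into UNIV s)"]) (auto simp: F actY_map_def)
qed

lemma inj_movesY: "F \<in> movesY G \<alpha> \<Longrightarrow> inj F"
  by (metis movesY_inverse injI)

lemma clopenY_vimage_movesY:
  assumes "F \<in> movesY G \<alpha>" "clopenY A"
  shows "clopenY (F -` A)"
proof -
  obtain g s where g: "g \<in> carrier G" and F: "F = actY_map \<alpha> g s"
    using assms by (auto simp: movesY_def)
  have "continuous_on UNIV (\<lambda>p. (\<alpha> g (fst p), s (snd p)))"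
    by (intro continuous_on_Pair
        continuous_on_compose2[OF continuous_on_action[OF g] continuous_on_fst]
        continuous_on_compose2[of UNIV s, OF _ continuous_on_snd])
      (simp_all add: continuous_on_id)
  then have "continuous_on UNIV F"
    by (simp add: F actY_map_def case_prod_beta')
  then show ?thesis
    using assms(2) by (auto simp: clopenY_def intro: open_vimage closed_vimage)
qed

lemma clopenY_image_movesY:
  assumes "F \<in> movesY G \<alpha>" "clopenY A"
  shows "clopenY (F ` A)"
proof -
  obtain F' where F': "F' \<in> movesY G \<alpha>" and FF': "\<And>y. F' (F y) = y" "\<And>y. F (F' y) = y"
    using movesY_inverse[OF assms(1)] by blast
  have "F ` A = F' -` A"
  proof (intro equalityI subsetI)
    fix y assume "y \<in> F' -` A"
    then show "y \<in> F ` A" using image_eqI[of y F "F' y"] FF'(2) by simp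
  qed (use FF'(1) in auto)
  then show ?thesis
    using clopenY_vimage_movesY[OF F' assms(2)] by simp
qed

lemma shift_in_movesY: "(\<lambda>(x, n). (x, s n)) \<in> movesY G \<alpha>" if "bij s"
proof -
  have "(\<lambda>(x, n). (x, s n)) = actY_map \<alpha> \<one> s"
    by (simp add: actY_map_def action_one)
  then show ?thesis using that unfolding movesY_def by blast
qed

lemma equidecI:
  assumes "equidecomposition I P F A B"
    and "\<And>i. i \<in> I \<Longrightarrow> clopenY (P i)" "\<And>i. i \<in> I \<Longrightarrow> F i \<in> movesY G \<alpha>"
  shows "equidec G \<alpha> A B"
proof -
  have "finite I" using assms(1) by (simp add: equidecomposition_def)
  then obtain h where h: "bij_betw h {..<card I} I"
    using ex_bij_betw_nat_finite atLeast0LessThan by metis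
  then have "\<forall>i<card I. F (h i) \<in> movesY G \<alpha>"
    using assms(3) by (auto simp: bij_betw_def)
  then have "\<forall>i<card I. \<exists>g s. g \<in> carrier G \<and> bij s \<and> F (h i) = actY_map \<alpha> g s"
    unfolding movesY_def by blast
  then obtain g s
    where gs: "\<And>i. i < card I \<Longrightarrow> g i \<in> carrier G \<and> bij (s i) \<and> F (h i) = actY_map \<alpha> (g i) (s i)"
    by metis
  have "equidecomposition {..<card I} (P \<circ> h) (F \<circ> h) A B"
    using equidecomposition_reindex[OF assms(1) h] .
  moreover have "(F \<circ> h) i ` (P \<circ> h) i = actY \<alpha> (g i) (s i) (P (h i))" if "i < card I" for i
    using gs[OF that] by (simp add: actY_eq_image)
  moreover have "clopenY (P (h i))" if "i < card I" for i
    using assms(2) h that by (auto simp: bij_betw_def)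
  ultimately show ?thesis
    unfolding equidec_def equidecomposition_def using gs
    by (intro exI[of _ "card I"] exI[of _ "P \<circ> h"] exI[of _ g] exI[of _ s])
      (auto simp: disjoint_family_on_def)
qed

lemma equidec_imp_equidecomposition:
  assumes "equidec G \<alpha> A B"
  shows "\<exists>(I :: nat set) P F.
    equidecomposition I P F A B \<and> (\<forall>i\<in>I. clopenY (P i) \<and> F i \<in> movesY G \<alpha>)"
proof -
  obtain n :: nat and P g s where "(\<forall>i<n. clopenY (P i) \<and> g i \<in> carrier G \<and> bij (s i)) \<and>
    disjoint_family_on P {..<n} \<and> A = (\<Union>i<n. P i) \<and>
    disjoint_family_on (\<lambda>i. actY \<alpha> (g i) (s i) (P i)) {..<n} \<and>
    B = (\<Union>i<n. actY \<alpha> (g i) (s i) (P i))"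
    using assms unfolding equidec_def by blast
  then have "equidecomposition {..<n} P (\<lambda>i. actY_map \<alpha> (g i) (s i)) A B"
    "\<forall>i\<in>{..<n}. clopenY (P i) \<and> actY_map \<alpha> (g i) (s i) \<in> movesY G \<alpha>"
    by (auto simp: equidecomposition_def movesY_def actY_eq_image)
  then show ?thesis
    by blast
qed

lemma equidec_image_movesY: "clopenY A \<Longrightarrow> F \<in> movesY G \<alpha> \<Longrightarrow> equidec G \<alpha> A (F ` A)"
  by (rule equidecI[of "{()}" "\<lambda>_. A" "\<lambda>_. F"])
    (auto simp: equidecomposition_def disjoint_family_on_def)

lemma equidec_refl:
  assumes "clopenY A"
  shows "equidec G \<alpha> A A"
proof -
  have "(\<lambda>(x, n). (x, id n)) = id"
    by auto
  then show ?thesis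
    using equidec_image_movesY[OF assms, of id] shift_in_movesY[OF bij_id] by simp
qed

lemma equidec_sym:
  assumes "equidec G \<alpha> A B"
  shows "equidec G \<alpha> B A"
proof -
  obtain I :: "nat set" and P F where e: "equidecomposition I P F A B"
    and PF: "\<forall>i\<in>I. clopenY (P i) \<and> F i \<in> movesY G \<alpha>"
    using equidec_imp_equidecomposition[OF assms] by blast
  have "\<forall>i\<in>I. \<exists>F'. F' \<in> movesY G \<alpha> \<and> (\<forall>y. F' (F i y) = y)"
    using PF by (metis movesY_inverse)
  then obtain F' where F': "\<And>i. i \<in> I \<Longrightarrow> F' i \<in> movesY G \<alpha> \<and> (\<forall>y. F' i (F i y) = y)"
    by metis
  have "equidecomposition I (\<lambda>i. F i ` P i) F' B A"
    using F' by (intro equidecomposition_sym[OF e]) blast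
  moreover have "clopenY (F i ` P i)" if "i \<in> I" for i
    using PF that by (simp add: clopenY_image_movesY)
  ultimately show ?thesis
    using F' by (intro equidecI) blast+
qed

lemma equidec_trans:
  assumes "equidec G \<alpha> A B" "equidec G \<alpha> B C"
  shows "equidec G \<alpha> A C"
proof -
  obtain I :: "nat set" and P F where AB: "equidecomposition I P F A B"
    and PF: "\<forall>i\<in>I. clopenY (P i) \<and> F i \<in> movesY G \<alpha>"
    using equidec_imp_equidecomposition[OF assms(1)] by blast
  obtain J :: "nat set" and Q H where BC: "equidecomposition J Q H B C"
    and QH: "\<forall>j\<in>J. clopenY (Q j) \<and> H j \<in> movesY G \<alpha>"
    using equidec_imp_equidecomposition[OF assms(2)] by blast
  have AC: "equidecomposition (I \<times> J) (\<lambda>(i, j). P i \<inter> F i -` Q j) (\<lambda>(i, j). H j \<circ> F i) A C"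
    using QH by (intro equidecomposition_trans[OF AB BC])
      (meson inj_movesY inj_on_subset subset_UNIV)
  have "clopenY (P i \<inter> F i -` Q j)" "H j \<circ> F i \<in> movesY G \<alpha>"
    if "i \<in> I" "j \<in> J" for i j
    using PF QH that by (simp_all add: clopenY_Int clopenY_vimage_movesY movesY_comp)
  then show ?thesis
    by (intro equidecI[OF AC]) auto
qed

lemma equidec_Un:
  assumes "equidec G \<alpha> A A'" "equidec G \<alpha> B B'" "A \<inter> B = {}" "A' \<inter> B' = {}"
  shows "equidec G \<alpha> (A \<union> B) (A' \<union> B')"
proof -
  obtain I :: "nat set" and P F where AA': "equidecomposition I P F A A'"
    and PF: "\<forall>i\<in>I. clopenY (P i) \<and> F i \<in> movesY G \<alpha>"
    using equidec_imp_equidecomposition[OF assms(1)] by blast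
  obtain J :: "nat set" and Q H where BB': "equidecomposition J Q H B B'"
    and QH: "\<forall>j\<in>J. clopenY (Q j) \<and> H j \<in> movesY G \<alpha>"
    using equidec_imp_equidecomposition[OF assms(2)] by blast
  show ?thesis
    using PF QH by (intro equidecI[OF equidecomposition_Un[OF AA' BB' assms(3,4)]]) auto
qed

lemma equidec_disjoint_copy:
  assumes "boundedY A" "clopenY B" "boundedY B"
  obtains B' where "clopenY B'" "boundedY B'" "equidec G \<alpha> B B'" "A \<inter> B' = {}"
proof -
  obtain N where N: "A \<union> B \<subseteq> UNIV \<times> {..<N}"
    using boundedY_Un[OF assms(1,3)] by (auto simp: boundedY_iff_subset)
  define sw where "sw n = (if n < N then n + N else if n < 2 * N then n - N else n)" for n
  have "sw \<circ> sw = id"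
    by (auto simp: sw_def fun_eq_iff)
  then have "bij sw"
    using o_bij by blast
  define F :: "'x \<times> nat \<Rightarrow> 'x \<times> nat" where "F = (\<lambda>(x, n). (x, sw n))"
  have F: "F \<in> movesY G \<alpha>"
    unfolding F_def using shift_in_movesY[OF \<open>bij sw\<close>] .
  have FB: "F ` B \<subseteq> UNIV \<times> {N..<2 * N}"
    using N by (auto simp: F_def sw_def)
  show ?thesis
  proof (rule that[of "F ` B"])
    show "boundedY (F ` B)"
      unfolding boundedY_iff_subset using FB by (intro exI[of _ "2 * N"]) auto
    show "A \<inter> F ` B = {}"
      using N FB by fastforce
  qed (use assms F in \<open>simp_all add: clopenY_image_movesY equidec_image_movesY\<close>)
qed

lemma mem_tcls_self: "clopenY A \<Longrightarrow> boundedY A \<Longrightarrow> A \<in> tcls G \<alpha> A"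
  by (simp add: tcls_def equidec_refl)

lemma tcls_eq: "equidec G \<alpha> A C \<Longrightarrow> tcls G \<alpha> A = tcls G \<alpha> C"
  unfolding tcls_def by (meson equidec_sym equidec_trans)

lemma Tsg_disjoint_representative:
  assumes "b \<in> Tsg G \<alpha>" "boundedY A"
  obtains B where "clopenY B" "boundedY B" "b = tcls G \<alpha> B" "A \<inter> B = {}"
proof -
  obtain B0 where "clopenY B0" "boundedY B0" "b = tcls G \<alpha> B0"
    using assms(1) by (rule TsgE)
  moreover obtain B where "clopenY B" "boundedY B" "equidec G \<alpha> B0 B" "A \<inter> B = {}"
    using equidec_disjoint_copy[OF assms(2) \<open>clopenY B0\<close> \<open>boundedY B0\<close>] .
  ultimately show ?thesis
    using that tcls_eq by metis
qed

lemma tadd_tcls: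
  assumes "clopenY A" "boundedY A" "clopenY B" "boundedY B" "A \<inter> B = {}"
  shows "tadd G \<alpha> (tcls G \<alpha> A) (tcls G \<alpha> B) = tcls G \<alpha> (A \<union> B)"
proof (intro Set.set_eqI iffI)
  fix C assume "C \<in> tadd G \<alpha> (tcls G \<alpha> A) (tcls G \<alpha> B)"
  then obtain A' B' where C: "clopenY C" "boundedY C" and "A' \<in> tcls G \<alpha> A" "B' \<in> tcls G \<alpha> B"
    and "A' \<inter> B' = {}" "equidec G \<alpha> (A' \<union> B') C"
    unfolding tadd_def by blast
  moreover from this have "equidec G \<alpha> (A \<union> B) (A' \<union> B')"
    using assms(5) by (intro equidec_Un) (simp_all add: tcls_def)
  ultimately show "C \<in> tcls G \<alpha> (A \<union> B)"
    by (auto simp: tcls_def intro: equidec_trans)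
next
  fix C assume "C \<in> tcls G \<alpha> (A \<union> B)"
  moreover have "A \<in> tcls G \<alpha> A" "B \<in> tcls G \<alpha> B"
    using assms by (simp_all add: mem_tcls_self)
  ultimately show "C \<in> tadd G \<alpha> (tcls G \<alpha> A) (tcls G \<alpha> B)"
    unfolding tadd_def tcls_def[of G \<alpha> "A \<union> B"] using assms(5) by blast
qed

lemma tadd_closed:
  assumes "a \<in> Tsg G \<alpha>" "b \<in> Tsg G \<alpha>"
  shows "tadd G \<alpha> a b \<in> Tsg G \<alpha>"
proof -
  obtain A where A: "clopenY A" "boundedY A" "a = tcls G \<alpha> A"
    using assms(1) by (rule TsgE)
  obtain B where B: "clopenY B" "boundedY B" "b = tcls G \<alpha> B" "A \<inter> B = {}"
    using Tsg_disjoint_representative[OF assms(2) A(2)] .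
  show ?thesis
    using A B by (simp add: tadd_tcls TsgI clopenY_Un boundedY_Un)
qed

lemma tadd_assoc:
  assumes "a \<in> Tsg G \<alpha>" "b \<in> Tsg G \<alpha>" "c \<in> Tsg G \<alpha>"
  shows "tadd G \<alpha> (tadd G \<alpha> a b) c = tadd G \<alpha> a (tadd G \<alpha> b c)"
proof -
  obtain A where A: "clopenY A" "boundedY A" "a = tcls G \<alpha> A"
    using assms(1) by (rule TsgE)
  obtain B where B: "clopenY B" "boundedY B" "b = tcls G \<alpha> B" "A \<inter> B = {}"
    using Tsg_disjoint_representative[OF assms(2) A(2)] .
  obtain C where C: "clopenY C" "boundedY C" "c = tcls G \<alpha> C" "(A \<union> B) \<inter> C = {}"
    using Tsg_disjoint_representative[OF assms(3) boundedY_Un[OF A(2) B(2)]] .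
  have "tadd G \<alpha> (tadd G \<alpha> a b) c = tcls G \<alpha> (A \<union> B \<union> C)"
    using A B C by (simp add: tadd_tcls clopenY_Un boundedY_Un)
  moreover have "tadd G \<alpha> a (tadd G \<alpha> b c) = tcls G \<alpha> (A \<union> (B \<union> C))"
    using A B C by (simp add: tadd_tcls clopenY_Un boundedY_Un Int_Un_distrib Int_Un_distrib2)
  ultimately show ?thesis
    by (simp add: Un_assoc)
qed

lemma tadd_tzero_left: "a \<in> Tsg G \<alpha> \<Longrightarrow> tadd G \<alpha> (tzero G \<alpha>) a = a"
  by (elim TsgE) (simp add: tzero_def tadd_tcls)

theorem comm_monoid_type_monoid: "comm_monoid (type_monoid G \<alpha>)"
proof (rule comm_monoidI, goal_cases)
  case 5
  then show ?case by (simp add: type_monoid_def tadd_commute)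
qed (simp_all add: type_monoid_def tadd_closed tadd_assoc tadd_tzero_left tzero_closed)

end

section \<open>Almost unperforation and states\<close>

lemma le_cInf_add_cInf:
  fixes X Y :: "real set"
  assumes "X \<noteq> {}" "Y \<noteq> {}" and le: "\<And>s t. s \<in> X \<Longrightarrow> t \<in> Y \<Longrightarrow> c \<le> s + t"
  shows "c \<le> Inf X + Inf Y"
proof -
  have "c - t \<le> Inf X" if "t \<in> Y" for t
    using assms(1) le[OF _ that] by (intro cInf_greatest) (auto simp: algebra_simps)
  then have "c - Inf X \<le> Inf Y"
    using assms(2) by (intro cInf_greatest) (auto simp: algebra_simps)
  then show ?thesis
    by simp
qed

definition monoid_state :: "('a, 'm) monoid_scheme \<Rightarrow> ('a \<Rightarrow> ennreal) \<Rightarrow> bool"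
  where "monoid_state M \<mu> \<longleftrightarrow> \<mu> \<one>\<^bsub>M\<^esub> = 0 \<and>
    (\<forall>x\<in>carrier M. \<forall>y\<in>carrier M. \<mu> (x \<otimes>\<^bsub>M\<^esub> y) = \<mu> x + \<mu> y)"

context comm_monoid
begin

lemma divides_mult_selfI:
  assumes "x \<in> carrier G" "c \<in> carrier G"
  shows "x divides x \<otimes> c" "x divides c \<otimes> x"
  using assms by (auto intro: dividesI' m_comm)

lemma divides_mult_mono:
  assumes "x divides y" "x' divides y'" "x \<in> carrier G" "x' \<in> carrier G"
  shows "x \<otimes> x' divides y \<otimes> y'"
proof -
  obtain c c' where "c \<in> carrier G" "y = x \<otimes> c" "c' \<in> carrier G" "y' = x' \<otimes> c'"
    using assms(1,2) by (auto elim!: dividesE)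
  then have "y \<otimes> y' = (x \<otimes> x') \<otimes> (c \<otimes> c')"
    using assms(3,4) by (simp add: m_ac)
  then show ?thesis
    using \<open>c \<in> carrier G\<close> \<open>c' \<in> carrier G\<close> by (auto intro: dividesI')
qed

lemma divides_nat_pow_mono:
  assumes "x divides y" "x \<in> carrier G"
  shows "x [^] (n::nat) divides y [^] n"
proof -
  obtain c where "c \<in> carrier G" "y = x \<otimes> c"
    using assms(1) by (auto elim!: dividesE)
  then show ?thesis
    using assms(2) by (auto simp: nat_pow_distrib intro: dividesI')
qed

lemma nat_pow_divides_nat_pow:
  assumes "m \<le> n" "x \<in> carrier G"
  shows "x [^] (m::nat) divides x [^] n"
proof -
  have "x [^] n = x [^] m \<otimes> x [^] (n - m)"
    using assms by (simp add: nat_pow_mult)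
  then show ?thesis
    using assms(2) by (auto intro: dividesI')
qed

lemma nat_pow_mult_cross:
  assumes "x \<in> carrier G" "y \<in> carrier G" "z \<in> carrier G"
  shows "(x \<otimes> y) [^] (n * n') \<otimes> z [^] (n' * m + n * m') =
    (x [^] n \<otimes> z [^] m) [^] n' \<otimes> (y [^] n' \<otimes> z [^] m') [^] (n::nat)"
  using assms by (simp add: nat_pow_distrib nat_pow_pow nat_pow_mult[symmetric] m_ac mult.commute)

lemma nat_pow_mult_nat_pow:
  assumes "x \<in> carrier G" "z \<in> carrier G"
  shows "(x [^] n) [^] (k::nat) \<otimes> z [^] (n * (m::nat)) = (x [^] k \<otimes> z [^] m) [^] (n::nat)"
  using assms by (simp add: nat_pow_distrib nat_pow_pow mult.commute)

lemma monoid_state_mono: "monoid_state G \<mu> \<Longrightarrow> x divides y \<Longrightarrow> x \<in> carrier G \<Longrightarrow> \<mu> x \<le> \<mu> y"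
  by (auto simp: monoid_state_def elim!: dividesE)

lemma monoid_state_nat_pow:
  assumes "monoid_state G \<mu>" "x \<in> carrier G"
  shows "\<mu> (x [^] (n::nat)) = of_nat n * \<mu> x"
proof (induction n)
  case (Suc n)
  then show ?case
    using assms by (simp add: monoid_state_def algebra_simps)
qed (use assms in \<open>simp add: monoid_state_def\<close>)

end

locale state_separation = comm_monoid G for G (structure) +
  fixes a b :: 'a and k :: nat
  assumes a_closed: "a \<in> carrier G" and b_closed: "b \<in> carrier G"
    and a_divides_b_pow: "a divides b [^] k"
    and not_a_divides_b: "\<not> a divides b"
    and unperforated: "\<And>n. a [^] Suc n divides b [^] n \<Longrightarrow> a divides b"
begin

definition order_ideal :: "'a set"
  where "order_ideal = {x \<in> carrier G. \<exists>j::nat. x divides b [^] j}"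

lemma order_ideal_carrier: "x \<in> order_ideal \<Longrightarrow> x \<in> carrier G"
  by (simp add: order_ideal_def)

lemma order_ideal_mult_iff:
  assumes "x \<in> carrier G" "y \<in> carrier G"
  shows "x \<otimes> y \<in> order_ideal \<longleftrightarrow> x \<in> order_ideal \<and> y \<in> order_ideal"
proof
  assume "x \<otimes> y \<in> order_ideal"
  then obtain j :: nat where "x \<otimes> y divides b [^] j"
    by (auto simp: order_ideal_def)
  moreover have "x divides x \<otimes> y" "y divides x \<otimes> y"
    using assms by (simp_all add: divides_mult_selfI)
  ultimately show "x \<in> order_ideal \<and> y \<in> order_ideal"
    using assms unfolding order_ideal_def by (blast intro: divides_trans)
next
  assume "x \<in> order_ideal \<and> y \<in> order_ideal"
  then obtain j j' :: nat where "x divides b [^] j" "y divides b [^] j'"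
    by (auto simp: order_ideal_def)
  then have "x \<otimes> y divides b [^] j \<otimes> b [^] j'"
    using assms by (simp add: divides_mult_mono)
  then have "x \<otimes> y divides b [^] (j + j')"
    using b_closed by (simp add: nat_pow_mult)
  then show "x \<otimes> y \<in> order_ideal"
    using assms by (auto simp: order_ideal_def)
qed

lemma order_ideal_mult: "x \<in> order_ideal \<Longrightarrow> y \<in> order_ideal \<Longrightarrow> x \<otimes> y \<in> order_ideal"
  by (simp add: order_ideal_mult_iff order_ideal_carrier)

lemma one_in_order_ideal: "\<one> \<in> order_ideal"
  unfolding order_ideal_def by (auto intro!: exI[of _ "0::nat"])

lemma order_ideal_nat_pow: "x \<in> order_ideal \<Longrightarrow> x [^] (n::nat) \<in> order_ideal"
  by (induction n) (simp_all add: one_in_order_ideal order_ideal_mult)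

lemma b_in_order_ideal: "b \<in> order_ideal"
  using b_closed by (auto simp: order_ideal_def intro!: exI[of _ 1])

lemma a_in_order_ideal: "a \<in> order_ideal"
  using a_closed a_divides_b_pow by (auto simp: order_ideal_def)

lemma a_exponent_le_b_exponent:
  assumes "x \<in> carrier G" "x [^] (n::nat) \<otimes> a [^] (m::nat) divides b [^] (j::nat)"
  shows "m \<le> j"
proof (rule ccontr)
  assume "\<not> m \<le> j"
  then have "a [^] Suc j divides a [^] m"
    using a_closed by (intro nat_pow_divides_nat_pow) auto
  also have "a [^] m divides x [^] n \<otimes> a [^] m"
    using assms(1) a_closed by (simp add: divides_mult_selfI)
  also note assms(2)
  finally show False
    using unperforated not_a_divides_b a_closed by blast
qed

text \<open>Values outside the order ideal are pinned to 0, so that minimality only concerns the ideal.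
  The condition on \<^term>\<open>x \<otimes> a [^] m\<close>, rather than just \<open>q a \<ge> 1\<close>, is what survives the
  passage to \<open>lower_functional\<close> below.\<close>

definition admissible :: "('a \<Rightarrow> real) \<Rightarrow> bool"
  where "admissible q \<longleftrightarrow> (\<forall>x. x \<notin> order_ideal \<longrightarrow> q x = 0) \<and>
    (\<forall>x\<in>order_ideal. 0 \<le> q x) \<and>
    (\<forall>x\<in>order_ideal. \<forall>y\<in>order_ideal. q (x \<otimes> y) \<le> q x + q y) \<and>
    (\<forall>x\<in>order_ideal. \<forall>n::nat. q (x [^] n) = real n * q x) \<and>
    (\<forall>x\<in>order_ideal. \<forall>y\<in>order_ideal. x divides y \<longrightarrow> q x \<le> q y) \<and>
    (\<forall>x\<in>order_ideal. \<forall>m::nat. q x + real m \<le> q (x \<otimes> a [^] m)) \<and>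
    q b \<le> 1"

context
  fixes q assumes q: "admissible q"
begin

lemma admissible_outside: "x \<notin> order_ideal \<Longrightarrow> q x = 0"
  using q by (simp add: admissible_def)

lemma admissible_nonneg: "x \<in> order_ideal \<Longrightarrow> 0 \<le> q x"
  using q by (simp add: admissible_def)

lemma admissible_subadditive: "x \<in> order_ideal \<Longrightarrow> y \<in> order_ideal \<Longrightarrow> q (x \<otimes> y) \<le> q x + q y"
  using q by (simp add: admissible_def)

lemma admissible_nat_pow: "x \<in> order_ideal \<Longrightarrow> q (x [^] (n::nat)) = real n * q x"
  using q by (simp add: admissible_def)

lemma admissible_mono: "x \<in> order_ideal \<Longrightarrow> y \<in> order_ideal \<Longrightarrow> x divides y \<Longrightarrow> q x \<le> q y"
  using q by (simp add: admissible_def)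

lemma admissible_mult_a_pow: "x \<in> order_ideal \<Longrightarrow> q x + real m \<le> q (x \<otimes> a [^] (m::nat))"
  using q by (simp add: admissible_def)

lemma admissible_b: "q b \<le> 1"
  using q by (simp add: admissible_def)

lemma admissible_one: "q \<one> = 0"
  using admissible_nat_pow[OF b_in_order_ideal, of 0] by simp

end

text \<open>In additive notation, \<^term>\<open>cover_ratios x\<close> consists of the quotients \<open>(j - m) / n\<close>
  with \<open>n x + m a \<le> j b\<close>.\<close>

definition cover_ratios :: "'a \<Rightarrow> real set"
  where "cover_ratios x =
    {(real j - real m) / real n | n m j. n \<ge> 1 \<and> x [^] n \<otimes> a [^] m divides b [^] j}"

definition cover_rate :: "'a \<Rightarrow> real"
  where "cover_rate x = (if x \<in> order_ideal then Inf (cover_ratios x) else 0)"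

lemma cover_ratiosI:
  "n \<ge> 1 \<Longrightarrow> x [^] n \<otimes> a [^] m divides b [^] j \<Longrightarrow> (real j - real m) / real n \<in> cover_ratios x"
  unfolding cover_ratios_def by blast

lemma cover_ratiosE:
  assumes "t \<in> cover_ratios x"
  obtains n m j :: nat where "t = (real j - real m) / real n" "n \<ge> 1"
    "x [^] n \<otimes> a [^] m divides b [^] j"
  using assms unfolding cover_ratios_def by blast

lemma cover_ratios_nonneg: "x \<in> carrier G \<Longrightarrow> t \<in> cover_ratios x \<Longrightarrow> 0 \<le> t"
  by (elim cover_ratiosE) (auto dest: a_exponent_le_b_exponent)

lemma cover_ratios_nonempty:
  assumes "x \<in> order_ideal"
  shows "cover_ratios x \<noteq> {}"
proof -
  obtain j :: nat where "x divides b [^] j"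
    using assms by (auto simp: order_ideal_def)
  then have "x [^] (1::nat) \<otimes> a [^] (0::nat) divides b [^] j"
    using order_ideal_carrier[OF assms] by simp
  then show ?thesis
    using cover_ratiosI by blast
qed

lemma cover_rate_le: "x \<in> order_ideal \<Longrightarrow> t \<in> cover_ratios x \<Longrightarrow> cover_rate x \<le> t"
  unfolding cover_rate_def using cover_ratios_nonneg order_ideal_carrier
  by (auto intro!: cInf_lower bdd_belowI[of _ 0])

lemma le_cover_rate: "x \<in> order_ideal \<Longrightarrow> (\<And>t. t \<in> cover_ratios x \<Longrightarrow> c \<le> t) \<Longrightarrow> c \<le> cover_rate x"
  unfolding cover_rate_def using cover_ratios_nonempty by (simp add: cInf_greatest)

lemma cover_rate_nonneg: "x \<in> order_ideal \<Longrightarrow> 0 \<le> cover_rate x"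
  using le_cover_rate cover_ratios_nonneg order_ideal_carrier by blast

lemma cover_rate_subadditive:
  assumes x: "x \<in> order_ideal" and y: "y \<in> order_ideal"
  shows "cover_rate (x \<otimes> y) \<le> cover_rate x + cover_rate y"
proof -
  have xc: "x \<in> carrier G" and yc: "y \<in> carrier G"
    using x y order_ideal_carrier by auto
  have "cover_rate (x \<otimes> y) \<le> s + t" if "s \<in> cover_ratios x" "t \<in> cover_ratios y" for s t
  proof -
    obtain n m j where s: "s = (real j - real m) / real n" "n \<ge> 1"
      "x [^] n \<otimes> a [^] m divides b [^] j"
      using \<open>s \<in> cover_ratios x\<close> by (rule cover_ratiosE)
    obtain n' m' j' where t: "t = (real j' - real m') / real n'" "n' \<ge> 1"
      "y [^] n' \<otimes> a [^] m' divides b [^] j'"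
      using \<open>t \<in> cover_ratios y\<close> by (rule cover_ratiosE)
    have "(x [^] n \<otimes> a [^] m) [^] n' \<otimes> (y [^] n' \<otimes> a [^] m') [^] n
        divides (b [^] j) [^] n' \<otimes> (b [^] j') [^] n"
      using s(3) t(3) xc yc a_closed by (intro divides_mult_mono divides_nat_pow_mono) auto
    moreover have "(b [^] j) [^] n' \<otimes> (b [^] j') [^] n = b [^] (n' * j + n * j')"
      using b_closed by (simp add: nat_pow_pow nat_pow_mult mult.commute)
    ultimately have "(x \<otimes> y) [^] (n * n') \<otimes> a [^] (n' * m + n * m') divides b [^] (n' * j + n * j')"
      unfolding nat_pow_mult_cross[OF xc yc a_closed] by simp
    then have "(real (n' * j + n * j') - real (n' * m + n * m')) / real (n * n')
        \<in> cover_ratios (x \<otimes> y)"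
      using s(2) t(2) by (intro cover_ratiosI) auto
    moreover have "(real (n' * j + n * j') - real (n' * m + n * m')) / real (n * n') = s + t"
      unfolding s(1) t(1) using s(2) t(2) by (simp add: field_simps)
    ultimately show ?thesis
      using cover_rate_le x y order_ideal_mult by metis
  qed
  then show ?thesis
    using x y cover_ratios_nonempty unfolding cover_rate_def[of x] cover_rate_def[of y]
    by (simp add: le_cInf_add_cInf)
qed

lemma cover_rate_one: "cover_rate \<one> = 0"
proof -
  have "\<one> [^] (1::nat) \<otimes> a [^] (0::nat) divides b [^] (0::nat)"
    by simp
  then have "(real (0::nat) - real (0::nat)) / real (1::nat) \<in> cover_ratios \<one>"
    by (intro cover_ratiosI) auto
  then show ?thesis
    using cover_rate_le[OF one_in_order_ideal] cover_rate_nonneg[OF one_in_order_ideal] by force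
qed

lemma cover_rate_nat_pow:
  assumes x: "x \<in> order_ideal"
  shows "cover_rate (x [^] (N::nat)) = real N * cover_rate x"
proof (cases "N = 0")
  case False
  have xc: "x \<in> carrier G" and xN: "x [^] N \<in> order_ideal"
    using x order_ideal_carrier order_ideal_nat_pow by auto
  have "cover_rate (x [^] N) \<le> real N * t" if t: "t \<in> cover_ratios x" for t
  proof -
    obtain n m j where t: "t = (real j - real m) / real n" "n \<ge> 1"
      "x [^] n \<otimes> a [^] m divides b [^] j"
      using t by (rule cover_ratiosE)
    have "(x [^] n \<otimes> a [^] m) [^] N divides (b [^] j) [^] N"
      using t(3) xc a_closed by (intro divides_nat_pow_mono) auto
    then have "(x [^] N) [^] n \<otimes> a [^] (N * m) divides b [^] (j * N)"
      using nat_pow_mult_nat_pow[OF xc a_closed, of N n m] b_closed by (simp add: nat_pow_pow)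
    then have "(real (j * N) - real (N * m)) / real n \<in> cover_ratios (x [^] N)"
      using t(2) by (intro cover_ratiosI)
    moreover have "(real (j * N) - real (N * m)) / real n = real N * t"
      unfolding t(1) by (simp add: field_simps)
    ultimately show ?thesis
      using cover_rate_le[OF xN] by metis
  qed
  then have "cover_rate (x [^] N) / real N \<le> cover_rate x"
    using False by (intro le_cover_rate[OF x]) (simp add: field_simps)
  moreover have "real N * cover_rate x \<le> cover_rate (x [^] N)"
  proof (rule le_cover_rate[OF xN])
    fix t assume "t \<in> cover_ratios (x [^] N)"
    then obtain n m j where t: "t = (real j - real m) / real n" "n \<ge> 1"
      "(x [^] N) [^] n \<otimes> a [^] m divides b [^] j"
      by (rule cover_ratiosE)
    have "x [^] (N * n) \<otimes> a [^] m divides b [^] j"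
      using t(3) xc by (simp add: nat_pow_pow)
    then have "(real j - real m) / real (N * n) \<in> cover_ratios x"
      using t(2) False by (intro cover_ratiosI) auto
    then have "real N * cover_rate x \<le> real N * ((real j - real m) / real (N * n))"
      using cover_rate_le[OF x] by (intro mult_left_mono) auto
    also have "\<dots> = t"
      unfolding t(1) using False t(2) by (simp add: field_simps)
    finally show "real N * cover_rate x \<le> t" .
  qed
  ultimately show ?thesis
    using False by (simp add: field_simps)
qed (simp add: cover_rate_one)

lemma cover_rate_mono:
  assumes x: "x \<in> order_ideal" and y: "y \<in> order_ideal" and "x divides y"
  shows "cover_rate x \<le> cover_rate y"
proof (rule le_cover_rate[OF y])
  fix t assume "t \<in> cover_ratios y"
  then obtain n m j where t: "t = (real j - real m) / real n" "n \<ge> 1"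
    "y [^] n \<otimes> a [^] m divides b [^] j"
    by (rule cover_ratiosE)
  have xc: "x \<in> carrier G"
    using x order_ideal_carrier by auto
  have "x [^] n \<otimes> a [^] m divides y [^] n \<otimes> a [^] m"
    using \<open>x divides y\<close> xc a_closed
    by (intro divides_mult_mono divides_nat_pow_mono divides_refl) auto
  then have "x [^] n \<otimes> a [^] m divides b [^] j"
    using t(3) xc a_closed by (blast intro: divides_trans)
  then show "cover_rate x \<le> t"
    using t(1,2) cover_rate_le[OF x] by (simp add: cover_ratiosI)
qed

lemma cover_rate_mult_a_pow:
  assumes x: "x \<in> order_ideal"
  shows "cover_rate x + real m' \<le> cover_rate (x \<otimes> a [^] (m'::nat))"
proof (rule le_cover_rate)
  show "x \<otimes> a [^] m' \<in> order_ideal"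
    using x a_in_order_ideal by (simp add: order_ideal_mult order_ideal_nat_pow)
  fix t assume "t \<in> cover_ratios (x \<otimes> a [^] m')"
  then obtain n m j where t: "t = (real j - real m) / real n" "n \<ge> 1"
    "(x \<otimes> a [^] m') [^] n \<otimes> a [^] m divides b [^] j"
    by (rule cover_ratiosE)
  have "(x \<otimes> a [^] m') [^] n \<otimes> a [^] m = x [^] n \<otimes> a [^] (m' * n + m)"
    using x a_closed order_ideal_carrier
    by (simp add: nat_pow_distrib nat_pow_pow m_assoc nat_pow_mult)
  then have "(real j - real (m' * n + m)) / real n \<in> cover_ratios x"
    using t by (intro cover_ratiosI) auto
  then have "cover_rate x \<le> (real j - real (m' * n + m)) / real n"
    using cover_rate_le[OF x] by blast
  also have "\<dots> = t - real m'"
    unfolding t(1) using t(2) by (simp add: field_simps)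
  finally show "cover_rate x + real m' \<le> t"
    by simp
qed

lemma cover_rate_b: "cover_rate b \<le> 1"
proof -
  have "b [^] (1::nat) \<otimes> a [^] (0::nat) divides b [^] (1::nat)"
    using b_closed by simp
  then have "(real (1::nat) - real (0::nat)) / real (1::nat) \<in> cover_ratios b"
    by (intro cover_ratiosI) auto
  then show ?thesis
    using cover_rate_le[OF b_in_order_ideal] by simp
qed

lemma admissible_cover_rate: "admissible cover_rate"
  unfolding admissible_def
  using cover_rate_nonneg cover_rate_subadditive cover_rate_nat_pow cover_rate_mono
    cover_rate_mult_a_pow cover_rate_b
  by (auto simp: cover_rate_def)

definition lower_ratios :: "('a \<Rightarrow> real) \<Rightarrow> 'a \<Rightarrow> 'a \<Rightarrow> real set"
  where "lower_ratios f z x = {(f (x [^] r \<otimes> z [^] n) - real n * f z) / real r | r n. (r::nat) \<ge> 1}"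

definition lower_functional :: "('a \<Rightarrow> real) \<Rightarrow> 'a \<Rightarrow> 'a \<Rightarrow> real"
  where "lower_functional f z x = (if x \<in> order_ideal then Inf (lower_ratios f z x) else 0)"

context
  fixes f z assumes f: "admissible f" and z: "z \<in> order_ideal"
begin

lemma lower_ratiosI: "r \<ge> 1 \<Longrightarrow> (f (x [^] r \<otimes> z [^] n) - real n * f z) / real r \<in> lower_ratios f z x"
  unfolding lower_ratios_def by blast

lemma lower_ratiosE:
  assumes "t \<in> lower_ratios f z x"
  obtains r n :: nat where "r \<ge> 1" "t = (f (x [^] r \<otimes> z [^] n) - real n * f z) / real r"
  using assms unfolding lower_ratios_def by blast

lemma lower_ratios_nonneg:
  assumes x: "x \<in> order_ideal" and "t \<in> lower_ratios f z x"
  shows "0 \<le> t"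
proof -
  obtain r n where t: "r \<ge> 1" "t = (f (x [^] r \<otimes> z [^] n) - real n * f z) / real r"
    using \<open>t \<in> lower_ratios f z x\<close> by (rule lower_ratiosE)
  have "f (z [^] n) \<le> f (x [^] r \<otimes> z [^] n)"
    using x z order_ideal_carrier
    by (intro admissible_mono[OF f] divides_mult_selfI)
      (auto simp: order_ideal_mult order_ideal_nat_pow)
  then show "0 \<le> t"
    unfolding t(2) using t(1) admissible_nat_pow[OF f z] by simp
qed

lemma value_in_lower_ratios: "x \<in> order_ideal \<Longrightarrow> f x \<in> lower_ratios f z x"
  using lower_ratiosI[of 1 x 0] order_ideal_carrier by simp

lemma lower_functional_le: "x \<in> order_ideal \<Longrightarrow> t \<in> lower_ratios f z x \<Longrightarrow> lower_functional f z x \<le> t"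
  unfolding lower_functional_def using lower_ratios_nonneg
  by (auto intro!: cInf_lower bdd_belowI[of _ 0])

lemma le_lower_functional:
  "x \<in> order_ideal \<Longrightarrow> (\<And>t. t \<in> lower_ratios f z x \<Longrightarrow> c \<le> t) \<Longrightarrow> c \<le> lower_functional f z x"
  unfolding lower_functional_def using value_in_lower_ratios by (auto intro: cInf_greatest)

lemma lower_functional_le_self: "lower_functional f z x \<le> f x"
  using lower_functional_le value_in_lower_ratios admissible_outside[OF f]
  by (cases "x \<in> order_ideal") (auto simp: lower_functional_def)

lemma lower_functional_subadditive:
  assumes x: "x \<in> order_ideal" and y: "y \<in> order_ideal"
  shows "lower_functional f z (x \<otimes> y) \<le> lower_functional f z x + lower_functional f z y"
proof -
  have xc: "x \<in> carrier G" and yc: "y \<in> carrier G" and zc: "z \<in> carrier G"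
    using x y z order_ideal_carrier by auto
  have "lower_functional f z (x \<otimes> y) \<le> s + t"
    if "s \<in> lower_ratios f z x" "t \<in> lower_ratios f z y" for s t
  proof -
    obtain r n where s: "r \<ge> 1" "s = (f (x [^] r \<otimes> z [^] n) - real n * f z) / real r"
      using \<open>s \<in> lower_ratios f z x\<close> by (rule lower_ratiosE)
    obtain r' n' where t: "r' \<ge> 1" "t = (f (y [^] r' \<otimes> z [^] n') - real n' * f z) / real r'"
      using \<open>t \<in> lower_ratios f z y\<close> by (rule lower_ratiosE)
    define X where "X = x [^] r \<otimes> z [^] n"
    define Y where "Y = y [^] r' \<otimes> z [^] n'"
    have XY: "X \<in> order_ideal" "Y \<in> order_ideal"
      using x y z by (simp_all add: X_def Y_def order_ideal_mult order_ideal_nat_pow)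
    have sub: "f (X [^] r' \<otimes> Y [^] r) \<le> real r' * f X + real r * f Y"
      using admissible_subadditive[OF f] admissible_nat_pow[OF f] XY order_ideal_nat_pow by metis
    let ?v = "(f ((x \<otimes> y) [^] (r * r') \<otimes> z [^] (r' * n + r * n')) - real (r' * n + r * n') * f z)
      / real (r * r')"
    have "?v \<in> lower_ratios f z (x \<otimes> y)"
      using s(1) t(1) by (intro lower_ratiosI) (simp add: Suc_le_eq)
    then have "lower_functional f z (x \<otimes> y) \<le> ?v"
      using lower_functional_le[OF order_ideal_mult[OF x y]] by blast
    also have "?v \<le> (real r' * f X + real r * f Y - real (r' * n + r * n') * f z) / real (r * r')"
      unfolding nat_pow_mult_cross[OF xc yc zc] X_def Y_def using sub[unfolded X_def Y_def]
      by (intro divide_right_mono) auto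
    also have "\<dots> = s + t"
      unfolding s(2) t(2) X_def[symmetric] Y_def[symmetric] using s(1) t(1)
      by (simp add: field_simps)
    finally show ?thesis .
  qed
  then have "lower_functional f z (x \<otimes> y) \<le> Inf (lower_ratios f z x) + Inf (lower_ratios f z y)"
    using x y value_in_lower_ratios by (intro le_cInf_add_cInf) blast+
  then show ?thesis
    using x y by (simp add: lower_functional_def[of f z x] lower_functional_def[of f z y])
qed

lemma lower_functional_one: "lower_functional f z \<one> = 0"
  using lower_functional_le_self[of \<one>] le_lower_functional[OF one_in_order_ideal]
    lower_ratios_nonneg[OF one_in_order_ideal] admissible_one[OF f]
  by (metis order_antisym)

lemma lower_functional_nat_pow:
  assumes x: "x \<in> order_ideal"
  shows "lower_functional f z (x [^] (N::nat)) = real N * lower_functional f z x"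
proof (cases "N = 0")
  case False
  have xc: "x \<in> carrier G" and zc: "z \<in> carrier G" and xN: "x [^] N \<in> order_ideal"
    using x z order_ideal_carrier order_ideal_nat_pow by auto
  have "lower_functional f z (x [^] N) \<le> real N * t" if t: "t \<in> lower_ratios f z x" for t
  proof -
    obtain r n where t: "r \<ge> 1" "t = (f (x [^] r \<otimes> z [^] n) - real n * f z) / real r"
      using t by (rule lower_ratiosE)
    have X: "x [^] r \<otimes> z [^] n \<in> order_ideal"
      using x z by (simp add: order_ideal_mult order_ideal_nat_pow)
    have "lower_functional f z (x [^] N)
        \<le> (f ((x [^] N) [^] r \<otimes> z [^] (N * n)) - real (N * n) * f z) / real r"
      using lower_functional_le[OF xN] lower_ratiosI[OF t(1)] by blast
    also have "\<dots> = real N * t"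
      unfolding t(2) nat_pow_mult_nat_pow[OF xc zc] admissible_nat_pow[OF f X]
      using t(1) by (simp add: field_simps)
    finally show ?thesis .
  qed
  then have "lower_functional f z (x [^] N) / real N \<le> lower_functional f z x"
    using False by (intro le_lower_functional[OF x]) (simp add: field_simps)
  moreover have "real N * lower_functional f z x \<le> lower_functional f z (x [^] N)"
  proof (rule le_lower_functional[OF xN])
    fix t assume "t \<in> lower_ratios f z (x [^] N)"
    then obtain r n where t: "r \<ge> 1" "t = (f ((x [^] N) [^] r \<otimes> z [^] n) - real n * f z) / real r"
      by (rule lower_ratiosE)
    have "(f (x [^] (N * r) \<otimes> z [^] n) - real n * f z) / real (N * r) \<in> lower_ratios f z x"
      using t(1) False by (intro lower_ratiosI) auto
    then have "real N * lower_functional f z x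
        \<le> real N * ((f (x [^] (N * r) \<otimes> z [^] n) - real n * f z) / real (N * r))"
      using lower_functional_le[OF x] by (intro mult_left_mono) auto
    also have "\<dots> = t"
      unfolding t(2) using False t(1) xc by (simp add: field_simps nat_pow_pow)
    finally show "real N * lower_functional f z x \<le> t" .
  qed
  ultimately show ?thesis
    using False by (simp add: field_simps)
qed (simp add: lower_functional_one)

lemma lower_functional_mono:
  assumes x: "x \<in> order_ideal" and y: "y \<in> order_ideal" and "x divides y"
  shows "lower_functional f z x \<le> lower_functional f z y"
proof (rule le_lower_functional[OF y])
  fix t assume "t \<in> lower_ratios f z y"
  then obtain r n where t: "r \<ge> 1" "t = (f (y [^] r \<otimes> z [^] n) - real n * f z) / real r"
    by (rule lower_ratiosE)
  have "f (x [^] r \<otimes> z [^] n) \<le> f (y [^] r \<otimes> z [^] n)"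
    using x y z \<open>x divides y\<close> order_ideal_carrier
    by (intro admissible_mono[OF f] divides_mult_mono divides_nat_pow_mono divides_refl)
      (auto simp: order_ideal_mult order_ideal_nat_pow)
  then have "(f (x [^] r \<otimes> z [^] n) - real n * f z) / real r \<le> t"
    unfolding t(2) using t(1) by (intro divide_right_mono) auto
  then show "lower_functional f z x \<le> t"
    using lower_functional_le[OF x] lower_ratiosI[OF t(1)] by (meson order_trans)
qed

lemma lower_functional_mult_a_pow:
  assumes x: "x \<in> order_ideal"
  shows "lower_functional f z x + real m \<le> lower_functional f z (x \<otimes> a [^] (m::nat))"
proof (rule le_lower_functional)
  show "x \<otimes> a [^] m \<in> order_ideal"
    using x a_in_order_ideal by (simp add: order_ideal_mult order_ideal_nat_pow)
  fix t assume "t \<in> lower_ratios f z (x \<otimes> a [^] m)"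
  then obtain r n where t: "r \<ge> 1" "t = (f ((x \<otimes> a [^] m) [^] r \<otimes> z [^] n) - real n * f z) / real r"
    by (rule lower_ratiosE)
  define X where "X = x [^] r \<otimes> z [^] n"
  have X: "X \<in> order_ideal"
    using x z by (simp add: X_def order_ideal_mult order_ideal_nat_pow)
  have "(x \<otimes> a [^] m) [^] r \<otimes> z [^] n = X \<otimes> a [^] (m * r)"
    using x z a_closed order_ideal_carrier unfolding X_def
    by (simp add: nat_pow_distrib nat_pow_pow m_ac)
  have "(f X - real n * f z) / real r + real m = (f X + real (m * r) - real n * f z) / real r"
    using t(1) by (simp add: field_simps)
  also have "\<dots> \<le> (f (X \<otimes> a [^] (m * r)) - real n * f z) / real r"
    using admissible_mult_a_pow[OF f X, of "m * r"] t(1) by (intro divide_right_mono) auto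
  also have "\<dots> = t"
    unfolding t(2) \<open>(x \<otimes> a [^] m) [^] r \<otimes> z [^] n = X \<otimes> a [^] (m * r)\<close> ..
  finally have "(f X - real n * f z) / real r + real m \<le> t" .
  moreover have "(f X - real n * f z) / real r \<in> lower_ratios f z x"
    unfolding X_def using t(1) by (rule lower_ratiosI)
  ultimately show "lower_functional f z x + real m \<le> t"
    using lower_functional_le[OF x] by fastforce
qed

lemma admissible_lower_functional: "admissible (lower_functional f z)"
proof -
  have "x \<notin> order_ideal \<Longrightarrow> lower_functional f z x = 0" for x
    by (simp add: lower_functional_def)
  moreover have "x \<in> order_ideal \<Longrightarrow> 0 \<le> lower_functional f z x" for x
    using le_lower_functional lower_ratios_nonneg by blast
  moreover have "lower_functional f z b \<le> 1"
    using lower_functional_le_self[of b] admissible_b[OF f] by linarith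
  ultimately show ?thesis
    unfolding admissible_def
    using lower_functional_subadditive lower_functional_nat_pow lower_functional_mono
      lower_functional_mult_a_pow by blast
qed

end

definition chain_inf :: "('a \<Rightarrow> real) set \<Rightarrow> 'a \<Rightarrow> real"
  where "chain_inf C x = (if x \<in> order_ideal then Inf ((\<lambda>q. q x) ` C) else 0)"

context
  fixes C assumes C_nonempty: "C \<noteq> {}" and C_admissible: "\<And>q. q \<in> C \<Longrightarrow> admissible q"
    and C_chain: "\<And>p q. p \<in> C \<Longrightarrow> q \<in> C \<Longrightarrow> (\<forall>x. p x \<le> q x) \<or> (\<forall>x. q x \<le> p x)"
begin

lemma chain_inf_le:
  assumes q: "q \<in> C"
  shows "chain_inf C x \<le> q x"
proof (cases "x \<in> order_ideal")
  case True
  then have "bdd_below ((\<lambda>q. q x) ` C)"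
    using C_admissible admissible_nonneg by (auto intro!: bdd_belowI[of _ 0])
  then show ?thesis
    using True q by (simp add: chain_inf_def cInf_lower)
qed (simp add: chain_inf_def admissible_outside[OF C_admissible[OF q]])

lemma le_chain_inf: "x \<in> order_ideal \<Longrightarrow> (\<And>q. q \<in> C \<Longrightarrow> c \<le> q x) \<Longrightarrow> c \<le> chain_inf C x"
  unfolding chain_inf_def using C_nonempty by (auto intro: cInf_greatest)

lemma chain_inf_subadditive:
  assumes x: "x \<in> order_ideal" and y: "y \<in> order_ideal"
  shows "chain_inf C (x \<otimes> y) \<le> chain_inf C x + chain_inf C y"
proof -
  have "chain_inf C (x \<otimes> y) \<le> p x + q y" if pq: "p \<in> C" "q \<in> C" for p q
  proof -
    obtain r where "r \<in> C" "r x \<le> p x" "r y \<le> q y"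
      using C_chain[OF pq] pq by (metis order_refl)
    then have "r (x \<otimes> y) \<le> p x + q y"
      using admissible_subadditive[OF C_admissible x y] by fastforce
    then show ?thesis
      using chain_inf_le[OF \<open>r \<in> C\<close>] by (meson order_trans)
  qed
  then have "chain_inf C (x \<otimes> y) \<le> Inf ((\<lambda>q. q x) ` C) + Inf ((\<lambda>q. q y) ` C)"
    using C_nonempty by (intro le_cInf_add_cInf) auto
  then show ?thesis
    using x y by (simp add: chain_inf_def[of C x] chain_inf_def[of C y])
qed

lemma chain_inf_nat_pow:
  assumes x: "x \<in> order_ideal"
  shows "chain_inf C (x [^] (n::nat)) = real n * chain_inf C x"
proof -
  have xn: "x [^] n \<in> order_ideal"
    using x order_ideal_nat_pow by blast
  have "real n * chain_inf C x \<le> chain_inf C (x [^] n)"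
  proof (rule le_chain_inf[OF xn])
    fix q assume q: "q \<in> C"
    have "real n * chain_inf C x \<le> real n * q x"
      using chain_inf_le[OF q] by (simp add: mult_left_mono)
    then show "real n * chain_inf C x \<le> q (x [^] n)"
      using admissible_nat_pow[OF C_admissible[OF q] x] by simp
  qed
  moreover have "chain_inf C (x [^] n) \<le> real n * chain_inf C x"
  proof (cases "n = 0")
    case True
    obtain q where "q \<in> C"
      using C_nonempty by blast
    then show ?thesis
      using True chain_inf_le[of q "x [^] n"] admissible_nat_pow[OF C_admissible x, of q 0] by simp
  next
    case False
    have "chain_inf C (x [^] n) / real n \<le> chain_inf C x"
      using False chain_inf_le admissible_nat_pow[OF C_admissible x]
      by (intro le_chain_inf[OF x]) (simp add: field_simps)
    then show ?thesis
      using False by (simp add: field_simps)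
  qed
  ultimately show ?thesis
    by simp
qed

lemma admissible_chain_inf: "admissible (chain_inf C)"
proof -
  obtain q where q: "q \<in> C"
    using C_nonempty by blast
  have "x \<in> order_ideal \<Longrightarrow> 0 \<le> chain_inf C x" for x
    using admissible_nonneg[OF C_admissible] by (intro le_chain_inf) auto
  moreover have "chain_inf C x \<le> chain_inf C y"
    if "x \<in> order_ideal" "y \<in> order_ideal" "x divides y" for x y
  proof (rule le_chain_inf[OF that(2)])
    fix q assume "q \<in> C"
    then show "chain_inf C x \<le> q y"
      using chain_inf_le[of q x] admissible_mono[OF C_admissible that] by force
  qed
  moreover have "chain_inf C x + real m \<le> chain_inf C (x \<otimes> a [^] m)" if "x \<in> order_ideal" for x m
  proof (rule le_chain_inf)
    show "x \<otimes> a [^] m \<in> order_ideal"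
      using that a_in_order_ideal by (simp add: order_ideal_mult order_ideal_nat_pow)
    fix q assume q: "q \<in> C"
    show "chain_inf C x + real m \<le> q (x \<otimes> a [^] m)"
      using chain_inf_le[OF q, of x] admissible_mult_a_pow[OF C_admissible[OF q] that, of m]
      by linarith
  qed
  moreover have "chain_inf C b \<le> 1"
    using chain_inf_le[OF q, of b] admissible_b[OF C_admissible[OF q]] by linarith
  ultimately show ?thesis
    unfolding admissible_def using chain_inf_subadditive chain_inf_nat_pow
    by (auto simp: chain_inf_def)
qed

end

definition admissible_order :: "(('a \<Rightarrow> real) \<times> ('a \<Rightarrow> real)) set"
  where "admissible_order = relation_of (\<lambda>p q. \<forall>x. q x \<le> p x) {q. admissible q}"

lemma admissible_order_iff:
  "(p, q) \<in> admissible_order \<longleftrightarrow> admissible p \<and> admissible q \<and> (\<forall>x. q x \<le> p x)"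
  by (simp add: admissible_order_def relation_of_def)

lemma Field_admissible_order: "Field admissible_order = {q. admissible q}"
  unfolding admissible_order_def
  by (rule Field_relation_of) (auto simp: relation_of_def refl_on_def)

lemma Partial_order_admissible_order: "Partial_order admissible_order"
  unfolding admissible_order_def
proof (intro Partial_order_relation_ofI partial_order_on_relation_ofI)
  show "p = q" if "\<forall>x. q x \<le> p x" "\<forall>x. p x \<le> q x" for p q :: "'a \<Rightarrow> real"
    using that by (simp add: fun_eq_iff order_antisym)
qed (blast intro: order_trans)+

lemma admissible_order_chain_bound:
  assumes "C \<in> Chains admissible_order"
  shows "\<exists>u\<in>Field admissible_order. \<forall>q\<in>C. (q, u) \<in> admissible_order"
proof (cases "C = {}")
  case True
  show ?thesis
    by (rule bexI[of _ cover_rate])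
      (simp_all add: True Field_admissible_order admissible_cover_rate)
next
  case False
  have adm: "\<And>q. q \<in> C \<Longrightarrow> admissible q"
    and chain: "\<And>p q. p \<in> C \<Longrightarrow> q \<in> C \<Longrightarrow> (\<forall>x. p x \<le> q x) \<or> (\<forall>x. q x \<le> p x)"
    using assms by (auto simp: Chains_def admissible_order_iff)
  have inf_adm: "admissible (chain_inf C)"
    by (rule admissible_chain_inf) (use False adm chain in auto)
  then have "chain_inf C \<in> Field admissible_order"
    by (simp add: Field_admissible_order)
  moreover have "(q, chain_inf C) \<in> admissible_order" if "q \<in> C" for q
    unfolding admissible_order_iff using adm[OF that] inf_adm chain_inf_le[OF False adm chain that]
    by blast
  ultimately show ?thesis
    by blast
qed

lemma exists_minimal_admissible:
  "\<exists>f. admissible f \<and> (\<forall>q. admissible q \<and> (\<forall>x. q x \<le> f x) \<longrightarrow> q = f)"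
proof -
  obtain f where f: "f \<in> Field admissible_order"
    and maximal: "\<forall>q\<in>Field admissible_order. (f, q) \<in> admissible_order \<longrightarrow> q = f"
    using Zorns_po_lemma[OF Partial_order_admissible_order admissible_order_chain_bound] by blast
  have "admissible f"
    using f by (simp add: Field_admissible_order)
  moreover have "\<forall>q. admissible q \<and> (\<forall>x. q x \<le> f x) \<longrightarrow> q = f"
  proof (intro allI impI)
    fix q assume "admissible q \<and> (\<forall>x. q x \<le> f x)"
    then show "q = f"
      using \<open>admissible f\<close>
      by (intro maximal[rule_format]) (simp_all add: Field_admissible_order admissible_order_iff)
  qed
  ultimately show ?thesis
    by blast
qed

lemma minimal_admissible_additive:
  assumes f: "admissible f" and minimal: "\<forall>q. admissible q \<and> (\<forall>x. q x \<le> f x) \<longrightarrow> q = f"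
    and x: "x \<in> order_ideal" and y: "y \<in> order_ideal"
  shows "f (x \<otimes> y) = f x + f y"
proof -
  have "lower_functional f y = f"
    using minimal admissible_lower_functional[OF f y] lower_functional_le_self[OF f y] by blast
  moreover have "lower_functional f y x \<le> f (x [^] (1::nat) \<otimes> y [^] (1::nat)) - f y"
    using lower_functional_le[OF f y x lower_ratiosI[OF f y, of 1 x 1]] by simp
  ultimately have "f x + f y \<le> f (x \<otimes> y)"
    using x y order_ideal_carrier by simp
  then show ?thesis
    using admissible_subadditive[OF f x y] by simp
qed

lemma monoid_state_of_additive:
  assumes f: "admissible f" and pos: "0 < f b"
    and additive: "\<And>x y. x \<in> order_ideal \<Longrightarrow> y \<in> order_ideal \<Longrightarrow> f (x \<otimes> y) = f x + f y"
  shows "monoid_state G (\<lambda>x. if x \<in> order_ideal then ennreal (f x / f b) else \<infinity>)"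
    (is "monoid_state G ?\<mu>")
proof -
  have "f \<one> = 0"
    by (rule admissible_one[OF f])
  moreover have "?\<mu> (x \<otimes> y) = ?\<mu> x + ?\<mu> y" if "x \<in> carrier G" "y \<in> carrier G" for x y
  proof (cases "x \<in> order_ideal \<and> y \<in> order_ideal")
    case True
    then show ?thesis
      using admissible_nonneg[OF f] pos
      by (simp add: order_ideal_mult additive add_divide_distrib ennreal_plus)
  next
    case False
    then show ?thesis
      using order_ideal_mult_iff[OF that] by auto
  qed
  ultimately show ?thesis
    by (simp add: monoid_state_def one_in_order_ideal)
qed

lemma exists_separating_state:
  obtains \<mu> where "monoid_state G \<mu>" "\<mu> b = 1" "1 \<le> \<mu> a"
proof -
  obtain f where f: "admissible f" and "\<forall>q. admissible q \<and> (\<forall>x. q x \<le> f x) \<longrightarrow> q = f"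
    using exists_minimal_admissible by blast
  then have additive: "\<And>x y. x \<in> order_ideal \<Longrightarrow> y \<in> order_ideal \<Longrightarrow> f (x \<otimes> y) = f x + f y"
    using minimal_admissible_additive by blast
  have fa: "1 \<le> f a"
    using admissible_mult_a_pow[OF f one_in_order_ideal, of 1] admissible_one[OF f] a_closed by simp
  have "f a \<le> real k * f b"
    using admissible_mono[OF f a_in_order_ideal order_ideal_nat_pow[OF b_in_order_ideal]]
      a_divides_b_pow admissible_nat_pow[OF f b_in_order_ideal] by simp
  then have pos: "0 < f b"
    using fa admissible_nonneg[OF f b_in_order_ideal] by (cases "f b = 0") auto
  have "1 \<le> f a / f b"
    using fa pos admissible_b[OF f] by (simp add: field_simps)
  then have "ennreal 1 \<le> ennreal (f a / f b)"
    by (rule ennreal_leI)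
  then show ?thesis
    using monoid_state_of_additive[OF f pos additive] pos
    by (intro that[of "\<lambda>x. if x \<in> order_ideal then ennreal (f x / f b) else \<infinity>"])
      (simp_all add: a_in_order_ideal b_in_order_ideal)
qed

end

context comm_monoid
begin

lemma monoid_state_lt_one:
  assumes \<mu>: "monoid_state G \<mu>" "\<mu> b = 1" and ab: "a \<in> carrier G" "b \<in> carrier G"
    and le: "a [^] Suc n divides b [^] n"
  shows "\<mu> a < 1"
proof (rule ccontr)
  assume "\<not> \<mu> a < 1"
  then have "of_nat (Suc n) * 1 \<le> of_nat (Suc n) * \<mu> a"
    by (intro mult_left_mono) (simp_all add: not_less)
  also have "\<dots> = \<mu> (a [^] Suc n)"
    by (rule monoid_state_nat_pow[OF \<mu>(1) ab(1), symmetric])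
  also have "\<dots> \<le> \<mu> (b [^] n)"
    using monoid_state_mono[OF \<mu>(1) le] ab by simp
  also have "\<dots> = of_nat n"
    using monoid_state_nat_pow[OF \<mu>(1) ab(2)] \<mu>(2) by simp
  finally have "(of_nat (Suc n) :: ennreal) \<le> of_nat n"
    by (simp only: mult_1_right)
  then show False
    by (simp only: of_nat_le_iff)
qed

theorem almost_unperforated_iff_state_comparison:
  "(\<forall>a\<in>carrier G. \<forall>b\<in>carrier G. \<forall>n::nat. a [^] Suc n divides b [^] n \<longrightarrow> a divides b) \<longleftrightarrow>
   (\<forall>a\<in>carrier G. \<forall>b\<in>carrier G.
      (\<exists>k::nat. a divides b [^] k) \<and> (\<forall>\<mu>. monoid_state G \<mu> \<and> \<mu> b = 1 \<longrightarrow> \<mu> a < 1) \<longrightarrow> a divides b)"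
proof (intro iffI ballI impI allI)
  fix a b
  assume unperforated:
      "\<forall>a\<in>carrier G. \<forall>b\<in>carrier G. \<forall>n::nat. a [^] Suc n divides b [^] n \<longrightarrow> a divides b"
    and ab: "a \<in> carrier G" "b \<in> carrier G"
    and comparison: "(\<exists>k::nat. a divides b [^] k) \<and> (\<forall>\<mu>. monoid_state G \<mu> \<and> \<mu> b = 1 \<longrightarrow> \<mu> a < 1)"
  show "a divides b"
  proof (rule ccontr)
    assume "\<not> a divides b"
    moreover obtain k :: nat where "a divides b [^] k"
      using comparison by blast
    ultimately have "state_separation G a b k"
      using comm_monoid_axioms unperforated ab
      unfolding state_separation_def state_separation_axioms_def by blast
    then obtain \<mu> where "monoid_state G \<mu>" "\<mu> b = 1" "1 \<le> \<mu> a"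
      by (rule state_separation.exists_separating_state)
    then show False
      using comparison by (blast dest: leD)
  qed
next
  fix a b and n :: nat
  assume "\<forall>a\<in>carrier G. \<forall>b\<in>carrier G.
      (\<exists>k::nat. a divides b [^] k) \<and> (\<forall>\<mu>. monoid_state G \<mu> \<and> \<mu> b = 1 \<longrightarrow> \<mu> a < 1) \<longrightarrow> a divides b"
    and ab: "a \<in> carrier G" "b \<in> carrier G" and le: "a [^] Suc n divides b [^] n"
  moreover have "a divides b [^] n"
    using le ab divides_mult_selfI[of a "a [^] n"] by (simp add: divides_trans)
  ultimately show "a divides b"
    using monoid_state_lt_one[OF _ _ ab le] ab by blast
qed

end

lemma tmult_eq_nat_pow: "tmult G \<alpha> n x = x [^]\<^bsub>type_monoid G \<alpha>\<^esub> n"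
  by (induction n) (simp_all add: type_monoid_def)

lemma tle_iff_divides: "tle G \<alpha> x y \<longleftrightarrow> x divides\<^bsub>type_monoid G \<alpha>\<^esub> y"
  by (simp add: tle_def factor_def type_monoid_def)

lemma is_state_iff_monoid_state: "is_state G \<alpha> \<mu> \<longleftrightarrow> monoid_state (type_monoid G \<alpha>) \<mu>"
  by (simp add: is_state_def monoid_state_def type_monoid_def)

theorem lemmal:
  fixes G :: "('g, 'b) monoid_scheme" and \<alpha> :: "'g \<Rightarrow> 'x::t2_space \<Rightarrow> 'x"
  assumes "continuous_action G \<alpha>"
    and "countable (carrier G)"
    and "compact (UNIV :: 'x set)"
    and "zero_dimensional TYPE('x)"
  shows "almost_unperforated G \<alpha> \<longleftrightarrow>
    (\<forall>a\<in>Tsg G \<alpha>. \<forall>b\<in>Tsg G \<alpha>.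
       ((\<exists>k::nat. tle G \<alpha> a (tmult G \<alpha> k b)) \<and>
        (\<forall>\<mu>. is_state G \<alpha> \<mu> \<and> \<mu> b = 1 \<longrightarrow> \<mu> a < 1))
       \<longrightarrow> tle G \<alpha> a b)"
proof -
  interpret type_semigroup G \<alpha>
    by unfold_locales (fact assms(1))
  have "carrier (type_monoid G \<alpha>) = Tsg G \<alpha>"
    by (simp add: type_monoid_def)
  then show ?thesis
    using comm_monoid.almost_unperforated_iff_state_comparison[OF comm_monoid_type_monoid]
    unfolding almost_unperforated_def tmult_eq_nat_pow tle_iff_divides is_state_iff_monoid_state
    by simp
qed

end
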